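(* Let $B=(\vec{e}_{\vec{k}(1)},\dots,\vec{e}_{\vec{k}(d)})$ be basis blades of $\mathcal{G}^{p,q}$, let $\vec{A}=\sum_{\vec{j}}a_{\vec{j}}\vec{e}_{\vec{j}}\in\mathcal{G}^{p,q}$, and for $\vec{l}\in\{0,1\}^d$ define $\vec c^{\vec{l}}(B)=\bigcap_{\nu=1}^d\vec c^{l_\nu}(\vec{e}_{\vec{k}(\nu)})$. Then the sets $\vec c^{\vec l}(B)$, $\vec l\in\{0,1\}^d$, are pairwise disjoint with union the set of all multi-indices $\vec j\subseteq\{1,\dots,n\}$, and for every $\vec l\in\{0,1\}^d$, $$\vec{A}_{\vec c^{\vec{l}}(B)}=\sum_{\vec{j}\in\vec c^{\vec{l}}(B)}a_{\vec{j}}\vec{e}_{\vec{j}}.$$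
   Context: $\mathcal{G}^{p,q}$ ($n=p+q$) is the real geometric algebra generated by orthonormal $\vec e_1,\dots,\vec e_n$ with $\vec e_j^2=1$ ($j\le p$), $\vec e_j^2=-1$ ($j>p$), $\vec e_j\vec e_k=-\vec e_k\vec e_j$ ($j\neq k$); $\vec e_{\vec j}=\vec e_{j_1}\cdots\vec e_{j_\iota}$ for $\vec j=\{j_1<\dots<j_\iota\}$, $\vec e_\emptyset=1$. For a basis blade $\vec e_{\vec k}$: $\vec c^0(\vec{e}_{\vec{k}})=\{\vec{j}:|\vec j||\vec k|-|\vec j\cap\vec k|\text{ even}\}$, $\vec c^1(\vec{e}_{\vec{k}})=\{\vec{j}:|\vec j||\vec k|-|\vec j\cap\vec k|\text{ odd}\}$. For invertible $\vec B$: $\vec{A}_{\vec c^0(\vec{B})}=\frac12(\vec{A}+\vec{B}^{-1}\vec{A}\vec{B})$, $\vec{A}_{\vec c^1(\vec{B})}=\frac12(\vec{A}-\vec{B}^{-1}\vec{A}\vec{B})$, and for a tuple $(\vec B_1,\dots,\vec B_d)$ and $\vec l\in\{0,1\}^d$: $\vec{A}_{\vec c^{\vec{l}}(\vec B_1,\dots,\vec B_d)}=((\vec{A}_{\vec c^{l_1}(\vec{B}_1)})_{\vec c^{l_2}(\vec{B}_2)}\cdots)_{\vec c^{l_d}(\vec{B}_d)}$. *)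

theory Defs
  imports Complex_Main
begin

text \<open>A multivector is represented by its coefficient function on multi-indices
  (subsets of {1..n}); the coefficient of the basis blade e_J is A J.\<close>

type_synonym mvec = "nat set \<Rightarrow> real"

definition ga_dim :: "nat \<Rightarrow> nat \<Rightarrow> nat" where
  "ga_dim p q = p + q"

definition multi_indices :: "nat \<Rightarrow> nat \<Rightarrow> nat set set" where
  "multi_indices p q = Pow {1..ga_dim p q}"

definition mvecs :: "nat \<Rightarrow> nat \<Rightarrow> mvec set" where
  "mvecs p q = {A. \<forall>S. S \<notin> multi_indices p q \<longrightarrow> A S = 0}"

definition blade :: "nat set \<Rightarrow> mvec" where
  "blade J = (\<lambda>S. if S = J then 1 else 0)"

definition gen_sq :: "nat \<Rightarrow> nat \<Rightarrow> real" where
  "gen_sq p j = (if j \<le> p then 1 else -1)"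

text \<open>e_J e_K = blade_sign p J K * e_{J \<triangle> K}: reorder the generators
  (one sign per inversion) and contract equal generators using their squares.\<close>
definition blade_sign :: "nat \<Rightarrow> nat set \<Rightarrow> nat set \<Rightarrow> real" where
  "blade_sign p J K =
     (-1) ^ card {(j, k). j \<in> J \<and> k \<in> K \<and> k < j} * (\<Prod>i\<in>J \<inter> K. gen_sq p i)"

definition gp :: "nat \<Rightarrow> nat \<Rightarrow> mvec \<Rightarrow> mvec \<Rightarrow> mvec" where
  "gp p q A B = (\<lambda>S. \<Sum>J\<in>multi_indices p q. \<Sum>K\<in>multi_indices p q.
      if (J - K) \<union> (K - J) = S then A J * B K * blade_sign p J K else 0)"

definition mv_inv :: "nat \<Rightarrow> nat \<Rightarrow> mvec \<Rightarrow> mvec" where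
  "mv_inv p q B = (THE X. X \<in> mvecs p q \<and> gp p q X B = blade {} \<and> gp p q B X = blade {})"

text \<open>A_{c^l(B)} = 1/2 (A + B^{-1} A B) for l = 0, 1/2 (A - B^{-1} A B) for l = 1.\<close>
definition proj :: "nat \<Rightarrow> nat \<Rightarrow> nat \<Rightarrow> mvec \<Rightarrow> mvec \<Rightarrow> mvec" where
  "proj p q l B A = (\<lambda>S. (A S + (if l = 0 then 1 else -1) *
      gp p q (gp p q (mv_inv p q B) A) B S) / 2)"

definition proj_tuple :: "nat \<Rightarrow> nat \<Rightarrow> mvec list \<Rightarrow> nat list \<Rightarrow> mvec \<Rightarrow> mvec" where
  "proj_tuple p q Bs ls A = fold (\<lambda>(B, l) X. proj p q l B X) (zip Bs ls) A"

definition cset :: "nat \<Rightarrow> nat \<Rightarrow> nat set \<Rightarrow> nat \<Rightarrow> nat set set" where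
  "cset p q K l = {J \<in> multi_indices p q.
      (int (card J * card K) - int (card (J \<inter> K))) mod 2 = int l}"

definition cset_tuple :: "nat \<Rightarrow> nat \<Rightarrow> nat set list \<Rightarrow> nat list \<Rightarrow> nat set set" where
  "cset_tuple p q ks ls = {J \<in> multi_indices p q.
      \<forall>\<nu><length ks. J \<in> cset p q (ks ! \<nu>) (ls ! \<nu>)}"

end

theory Submission
  imports Defs
begin

text \<open>Moving e_K once through e_J costs one sign per pair (j, k) in J \<times> K with j \<noteq> k, so
  e_K^-1 e_J e_K = (-1)^(|J||K| - |J \<inter> K|) e_J. Hence the projection of A with respect to e_K
  keeps exactly the coefficients a_J with J \<in> c^l(e_K) and deletes the others, and iterating
  these projections keeps the coefficients indexed by the intersection c^l(B). The sets
  c^l(B) are the fibres of the map sending J to its vector of parities, so they partition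
  the multi-indices.\<close>

definition inversions :: "nat set \<Rightarrow> nat set \<Rightarrow> nat" where
  "inversions J K = card {(j, k). j \<in> J \<and> k \<in> K \<and> k < j}"

lemma blade_sign_inversions:
  "blade_sign p J K = (-1) ^ inversions J K * (\<Prod>i\<in>J \<inter> K. gen_sq p i)"
  unfolding blade_sign_def inversions_def by simp

lemma blade_sign_nonzero: "blade_sign p J K \<noteq> 0"
proof -
  have "\<bar>gen_sq p i\<bar> = 1" for i by (simp add: gen_sq_def)
  then have "\<bar>\<Prod>i\<in>J \<inter> K. gen_sq p i\<bar> = 1" by (simp add: abs_prod)
  then show ?thesis unfolding blade_sign_def by auto
qed

lemma inversions_Un_left:
  assumes "finite J1" "finite J2" "finite K" "J1 \<inter> J2 = {}"
  shows "inversions (J1 \<union> J2) K = inversions J1 K + inversions J2 K"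
proof -
  have "{(j, k). j \<in> J1 \<union> J2 \<and> k \<in> K \<and> k < j} =
      {(j, k). j \<in> J1 \<and> k \<in> K \<and> k < j} \<union> {(j, k). j \<in> J2 \<and> k \<in> K \<and> k < j}"
    by auto
  moreover have "finite {(j, k). j \<in> J \<and> k \<in> K \<and> k < j}" if "finite J" for J
    by (rule finite_subset[of _ "J \<times> K"]) (use that assms(3) in auto)
  ultimately show ?thesis
    unfolding inversions_def using assms by (subst card_Un_disjoint[symmetric]) auto
qed

lemma inversions_Un_right:
  assumes "finite J" "finite K1" "finite K2" "K1 \<inter> K2 = {}"
  shows "inversions J (K1 \<union> K2) = inversions J K1 + inversions J K2"
proof -
  have "{(j, k). j \<in> J \<and> k \<in> K1 \<union> K2 \<and> k < j} =
      {(j, k). j \<in> J \<and> k \<in> K1 \<and> k < j} \<union> {(j, k). j \<in> J \<and> k \<in> K2 \<and> k < j}"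
    by auto
  moreover have "finite {(j, k). j \<in> J \<and> k \<in> K \<and> k < j}" if "finite K" for K
    by (rule finite_subset[of _ "J \<times> K"]) (use that assms(1) in auto)
  ultimately show ?thesis
    unfolding inversions_def using assms by (subst card_Un_disjoint[symmetric]) auto
qed

lemma inversions_swap:
  assumes "finite J" "finite K"
  shows "inversions J K + inversions K J + card (J \<inter> K) = card J * card K"
proof -
  let ?P = "{(j, k). j \<in> J \<and> k \<in> K \<and> k < j}"
  let ?Q = "{(j, k). j \<in> J \<and> k \<in> K \<and> j < k}"
  let ?D = "{(j, k). j \<in> J \<and> k \<in> K \<and> j = k}"
  have fin: "finite ?P" "finite ?Q" "finite ?D"
    by (rule finite_subset[of _ "J \<times> K"]; use assms in auto)+
  have "J \<times> K = ?P \<union> ?Q \<union> ?D" by auto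
  then have "card (J \<times> K) = card ?P + card ?Q + card ?D"
    using fin by (simp only:) (subst card_Un_disjoint, auto)+
  moreover have "?Q = prod.swap ` {(j, k). j \<in> K \<and> k \<in> J \<and> k < j}" by auto
  then have "card ?Q = inversions K J" unfolding inversions_def by (simp add: card_image)
  moreover have "?D = (\<lambda>x. (x, x)) ` (J \<inter> K)" by auto
  then have "card ?D = card (J \<inter> K)" by (simp add: card_image inj_on_def)
  ultimately show ?thesis by (simp add: inversions_def card_cartesian_product)
qed

lemma inversions_conj_parity:
  assumes "finite S" "finite K"
  shows "inversions K K + (card S * card K - card (S \<inter> K)) =
    inversions K S + inversions (sym_diff S K) K + 2 * inversions (S \<inter> K) K"
proof -
  have fin: "finite (S \<inter> K)" "finite (S - K)" "finite (K - S)" using assms by auto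
  have "inversions K S = inversions K (S \<inter> K) + inversions K (S - K)"
    using inversions_Un_right[OF assms(2) fin(1,2)] by (auto simp: Int_Diff_Un)
  moreover have "inversions (sym_diff S K) K = inversions (S - K) K + inversions (K - S) K"
    using inversions_Un_left[OF fin(2,3) assms(2)] by auto
  moreover have "inversions K K = inversions (S \<inter> K) K + inversions (K - S) K"
    using inversions_Un_left[OF fin(1,3) assms(2)] by (auto simp: Int_commute Int_Diff_Un)
  moreover have "inversions K (S - K) + inversions (S - K) K = card K * card (S - K)"
    using inversions_swap[OF assms(2) fin(2)] by (simp add: Int_commute)
  moreover have "inversions K (S \<inter> K) + inversions (S \<inter> K) K + card (S \<inter> K)
      = card K * card (S \<inter> K)"
    using inversions_swap[OF assms(2) fin(1)] by (simp add: Int_commute inf_left_commute)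
  moreover have "card S * card K = card K * card (S \<inter> K) + card K * card (S - K)"
    using card_Int_Diff[OF assms(1), of K] by (simp add: algebra_simps)
  ultimately show ?thesis by linarith
qed

lemma blade_sign_conj:
  assumes "finite S" "finite K"
  shows "blade_sign p K S * blade_sign p (sym_diff S K) K =
    blade_sign p K K * (-1) ^ (card S * card K - card (S \<inter> K))"
proof -
  let ?E = "card S * card K - card (S \<inter> K)"
  have prod: "(\<Prod>i\<in>K \<inter> S. gen_sq p i) * (\<Prod>i\<in>sym_diff S K \<inter> K. gen_sq p i)
      = (\<Prod>i\<in>K. gen_sq p i)"
  proof -
    have "sym_diff S K \<inter> K = K - S" by auto
    then show ?thesis using prod.Int_Diff[OF assms(2), of "gen_sq p" S] by simp
  qed
  have "(-1::real) ^ (inversions K S + inversions (sym_diff S K) K)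
      = (-1) ^ (inversions K K + ?E)"
    unfolding inversions_conj_parity[OF assms] by (simp add: power_add power_mult)
  then have pow: "(-1::real) ^ inversions K S * (-1) ^ inversions (sym_diff S K) K
      = (-1) ^ inversions K K * (-1) ^ ?E"
    by (simp only: power_add)
  have "blade_sign p K S * blade_sign p (sym_diff S K) K
      = ((-1) ^ inversions K S * (-1) ^ inversions (sym_diff S K) K) *
        ((\<Prod>i\<in>K \<inter> S. gen_sq p i) * (\<Prod>i\<in>sym_diff S K \<inter> K. gen_sq p i))"
    by (simp only: blade_sign_inversions mult_ac)
  also have "\<dots> = blade_sign p K K * (-1) ^ ?E"
    unfolding pow prod blade_sign_inversions by (simp only: Int_absorb mult_ac)
  finally show ?thesis .
qed

lemma finite_multi_indices: "finite (multi_indices p q)"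
  by (simp add: multi_indices_def)

lemma finite_multi_index: "J \<in> multi_indices p q \<Longrightarrow> finite J"
  by (auto simp: multi_indices_def intro: finite_subset)

lemma sym_diff_multi_indices_iff:
  "K \<in> multi_indices p q \<Longrightarrow> sym_diff J K \<in> multi_indices p q \<longleftrightarrow> J \<in> multi_indices p q"
  by (auto simp: multi_indices_def)

lemma sym_diff_eq_iff_right: "sym_diff A B = C \<longleftrightarrow> B = sym_diff A C"
  by blast

lemma sym_diff_eq_iff_left: "sym_diff A B = C \<longleftrightarrow> A = sym_diff C B"
  by blast

lemma gp_scale_left: "gp p q (\<lambda>T. c * A T) X = (\<lambda>S. c * gp p q A X S)"
  unfolding gp_def by (simp add: sum_distrib_left if_distrib mult_ac cong: if_cong)

lemma gp_blade_left:
  assumes K: "K \<in> multi_indices p q"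
  shows "gp p q (blade K) X S =
    (if S \<in> multi_indices p q then X (sym_diff K S) * blade_sign p K (sym_diff K S) else 0)"
proof -
  have "gp p q (blade K) X S = (\<Sum>J\<in>multi_indices p q. if J = K then
      (\<Sum>L\<in>multi_indices p q. if sym_diff K L = S then X L * blade_sign p K L else 0) else 0)"
    unfolding gp_def blade_def by (intro sum.cong refl) (simp cong: if_cong)
  also have "\<dots> = (\<Sum>L\<in>multi_indices p q.
      if L = sym_diff K S then X L * blade_sign p K L else 0)"
    using K finite_multi_indices by (simp add: sym_diff_eq_iff_right)
  finally show ?thesis
    using sym_diff_multi_indices_iff[OF K, of S] finite_multi_indices by (simp add: Un_commute)
qed

lemma gp_blade_right:
  assumes K: "K \<in> multi_indices p q"
  shows "gp p q X (blade K) S =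
    (if S \<in> multi_indices p q then X (sym_diff S K) * blade_sign p (sym_diff S K) K else 0)"
proof -
  have inner: "(\<Sum>L\<in>multi_indices p q.
      if sym_diff J L = S then X J * blade K L * blade_sign p J L else 0)
      = (if sym_diff J K = S then X J * blade_sign p J K else 0)" for J
  proof -
    have "(\<Sum>L\<in>multi_indices p q.
        if sym_diff J L = S then X J * blade K L * blade_sign p J L else 0)
        = (\<Sum>L\<in>multi_indices p q.
        if L = K then (if sym_diff J K = S then X J * blade_sign p J K else 0) else 0)"
      by (rule sum.cong) (simp_all add: blade_def cong: if_cong)
    then show ?thesis using K finite_multi_indices by simp
  qed
  have "gp p q X (blade K) S = (\<Sum>J\<in>multi_indices p q.
      if J = sym_diff S K then X J * blade_sign p J K else 0)"
    unfolding gp_def inner by (simp only: sym_diff_eq_iff_left)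
  then show ?thesis
    using sym_diff_multi_indices_iff[OF K, of S] finite_multi_indices by simp
qed

lemma mv_inv_blade:
  assumes K: "K \<in> multi_indices p q"
  shows "mv_inv p q (blade K) = (\<lambda>T. inverse (blade_sign p K K) * blade K T)"
proof -
  define Xi where "Xi = (\<lambda>T. inverse (blade_sign p K K) * blade K T)"
  have nz: "blade_sign p K K \<noteq> 0" by (rule blade_sign_nonzero)
  have empty: "{} \<in> multi_indices p q" by (simp add: multi_indices_def)
  have "Xi \<in> mvecs p q" using K by (auto simp: mvecs_def Xi_def blade_def)
  moreover have "gp p q Xi (blade K) = blade {}"
  proof
    fix S
    have "sym_diff S K = K \<longleftrightarrow> S = {}" by blast
    then show "gp p q Xi (blade K) S = blade {} S"
      unfolding gp_blade_right[OF K] using nz empty by (auto simp: Xi_def blade_def)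
  qed
  moreover have "gp p q (blade K) Xi = blade {}"
  proof
    fix S
    have "sym_diff K S = K \<longleftrightarrow> S = {}" by blast
    then show "gp p q (blade K) Xi S = blade {} S"
      unfolding gp_blade_left[OF K] using nz empty by (auto simp: Xi_def blade_def)
  qed
  moreover have "X = Xi" if X: "X \<in> mvecs p q" "gp p q X (blade K) = blade {}" for X
  proof
    fix T
    show "X T = Xi T"
    proof (cases "T \<in> multi_indices p q")
      case False
      then show ?thesis using X(1) K by (auto simp: mvecs_def Xi_def blade_def)
    next
      case True
      have "sym_diff (sym_diff T K) K = T" "sym_diff T K = {} \<longleftrightarrow> T = K" by blast+
      then have "X T * blade_sign p T K = gp p q X (blade K) (sym_diff T K)"
        using True sym_diff_multi_indices_iff[OF K, of T] by (simp add: gp_blade_right[OF K])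
      also have "\<dots> = (if T = K then 1 else 0)"
        using X(2) \<open>sym_diff T K = {} \<longleftrightarrow> T = K\<close> by (simp add: blade_def)
      finally have "X T * blade_sign p T K = (if T = K then 1 else 0)" .
      then show ?thesis
        using nz blade_sign_nonzero[of p T K]
        by (cases "T = K") (simp_all add: Xi_def blade_def field_simps)
    qed
  qed
  ultimately show ?thesis
    unfolding mv_inv_def Xi_def[symmetric] by (intro the_equality) blast+
qed

lemma blade_conjugation:
  assumes K: "K \<in> multi_indices p q" and X: "X \<in> mvecs p q"
  shows "gp p q (gp p q (mv_inv p q (blade K)) X) (blade K) S =
    (-1) ^ (card S * card K - card (S \<inter> K)) * X S"
proof (cases "S \<in> multi_indices p q")
  case False
  then show ?thesis using X by (simp add: gp_blade_right[OF K] mvecs_def)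
next
  case S: True
  have "sym_diff K (sym_diff S K) = S" by blast
  then have "gp p q (gp p q (mv_inv p q (blade K)) X) (blade K) S
      = inverse (blade_sign p K K) * X S *
        (blade_sign p K S * blade_sign p (sym_diff S K) K)"
    using S sym_diff_multi_indices_iff[OF K, of S]
    by (simp add: gp_blade_right[OF K] gp_blade_left[OF K] mv_inv_blade[OF K] gp_scale_left)
  also have "\<dots> = (-1) ^ (card S * card K - card (S \<inter> K)) * X S"
    using blade_sign_nonzero[of p K K]
    by (simp add: blade_sign_conj finite_multi_index[OF S] finite_multi_index[OF K])
  finally show ?thesis .
qed

definition commutation_parity :: "nat set \<Rightarrow> nat set \<Rightarrow> nat" where
  "commutation_parity J K = (card J * card K - card (J \<inter> K)) mod 2"

lemma mem_cset_iff:
  assumes "finite K"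
  shows "J \<in> cset p q K l \<longleftrightarrow> J \<in> multi_indices p q \<and> l = commutation_parity J K"
proof (cases "J \<in> multi_indices p q")
  case True
  then have "card (J \<inter> K) \<le> card J * card K"
    using inversions_swap[OF finite_multi_index[OF True] assms] by linarith
  then have "(int (card J * card K) - int (card (J \<inter> K))) mod 2 = int (commutation_parity J K)"
    unfolding commutation_parity_def by (simp only: of_nat_diff zmod_int) simp
  then show ?thesis
    unfolding cset_def using True by auto
qed (simp add: cset_def)

lemma proj_blade:
  assumes K: "K \<in> multi_indices p q" and X: "X \<in> mvecs p q" and l: "l \<in> {0, 1}"
  shows "proj p q l (blade K) X = (\<lambda>S. if S \<in> cset p q K l then X S else 0)"
proof
  fix S
  show "proj p q l (blade K) X S = (if S \<in> cset p q K l then X S else 0)"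
  proof (cases "S \<in> multi_indices p q")
    case False
    then show ?thesis
      using X by (simp add: proj_def blade_conjugation[OF K X] cset_def mvecs_def)
  next
    case True
    let ?c = "commutation_parity S K"
    have sign: "(-1) ^ (card S * card K - card (S \<inter> K)) = ((-1) ^ ?c :: real)"
      by (simp add: commutation_parity_def minus_one_power_iff)
    have c: "?c \<in> {0, 1}" by (auto simp: commutation_parity_def)
    have "proj p q l (blade K) X S = (X S + (if l = 0 then 1 else -1) * ((-1) ^ ?c * X S)) / 2"
      by (simp only: proj_def blade_conjugation[OF K X] sign)
    also have "\<dots> = (if l = ?c then X S else 0)"
      using l c by (elim insertE) simp_all
    also have "\<dots> = (if S \<in> cset p q K l then X S else 0)"
      using True finite_multi_index[OF K] by (simp add: mem_cset_iff)
    finally show ?thesis .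
  qed
qed

lemma cset_tuple_Cons:
  "cset_tuple p q (K # ks) (l # ls) = cset p q K l \<inter> cset_tuple p q ks ls"
  by (auto simp: cset_tuple_def cset_def All_less_Suc2)

lemma proj_tuple_blades:
  assumes "length ls = length ks" "set ls \<subseteq> {0, 1}" "set ks \<subseteq> multi_indices p q"
    and "X \<in> mvecs p q"
  shows "proj_tuple p q (map blade ks) ls X =
    (\<lambda>S. if S \<in> cset_tuple p q ks ls then X S else 0)"
  using assms
proof (induction ks arbitrary: ls X)
  case Nil
  then show ?case by (auto simp: proj_tuple_def cset_tuple_def mvecs_def)
next
  case (Cons K ks)
  then obtain l ls' where ls: "ls = l # ls'" by (cases ls) auto
  have K: "K \<in> multi_indices p q" and l: "l \<in> {0, 1}" using Cons.prems ls by auto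
  have "proj_tuple p q (map blade (K # ks)) ls X =
      proj_tuple p q (map blade ks) ls' (proj p q l (blade K) X)"
    by (simp add: ls proj_tuple_def)
  also have "\<dots> = (\<lambda>S. if S \<in> cset_tuple p q ks ls' then proj p q l (blade K) X S else 0)"
    using Cons.prems ls by (intro Cons.IH) (auto simp: proj_blade[OF K _ l] mvecs_def cset_def)
  finally show ?case
    by (simp add: proj_blade[OF K Cons.prems(4) l] ls cset_tuple_Cons fun_eq_iff)
qed

lemma mem_cset_tuple_iff:
  assumes "set ks \<subseteq> multi_indices p q" "length ls = length ks"
  shows "J \<in> cset_tuple p q ks ls \<longleftrightarrow>
    J \<in> multi_indices p q \<and> ls = map (commutation_parity J) ks"
proof -
  have "finite (ks ! \<nu>)" if "\<nu> < length ks" for \<nu>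
    using assms(1) nth_mem[OF that] finite_multi_index by blast
  then show ?thesis
    using assms(2) by (auto simp: cset_tuple_def mem_cset_iff list_eq_iff_nth_eq)
qed

lemma sum_scaled_blades:
  "finite C \<Longrightarrow> (\<lambda>S. \<Sum>J\<in>C. a J * blade J S) = (\<lambda>S. if S \<in> C then a S else 0)"
  by (simp add: blade_def if_distrib[of "\<lambda>x. _ * x"] sum.delta cong: if_cong)

theorem lemma3p11:
  fixes p q :: nat and ks :: "nat set list" and a :: "nat set \<Rightarrow> real"
  assumes "ks \<noteq> []"
    and "\<forall>K\<in>set ks. K \<in> multi_indices p q"
  defines "A \<equiv> (\<lambda>S. \<Sum>J\<in>multi_indices p q. a J * blade J S)"
    and "Ls \<equiv> {ls :: nat list. length ls = length ks \<and> set ls \<subseteq> {0, 1}}"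
  shows "(\<forall>l\<in>Ls. \<forall>l'\<in>Ls. l \<noteq> l' \<longrightarrow> cset_tuple p q ks l \<inter> cset_tuple p q ks l' = {})
       \<and> (\<Union>l\<in>Ls. cset_tuple p q ks l) = multi_indices p q
       \<and> (\<forall>l\<in>Ls. proj_tuple p q (map blade ks) l A =
            (\<lambda>S. \<Sum>J\<in>cset_tuple p q ks l. a J * blade J S))"
proof (intro conjI ballI impI)
  have ks: "set ks \<subseteq> multi_indices p q" using assms(2) by blast
  show "cset_tuple p q ks l \<inter> cset_tuple p q ks l' = {}"
    if "l \<in> Ls" "l' \<in> Ls" "l \<noteq> l'" for l l'
    using that mem_cset_tuple_iff[OF ks] by (auto simp: Ls_def)
  have "map (commutation_parity J) ks \<in> Ls" for J
    by (auto simp: Ls_def commutation_parity_def)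
  then show "(\<Union>l\<in>Ls. cset_tuple p q ks l) = multi_indices p q"
    using mem_cset_tuple_iff[OF ks] by (auto simp: Ls_def cset_tuple_def)
  fix l assume l: "l \<in> Ls"
  have C: "cset_tuple p q ks l \<subseteq> multi_indices p q" by (auto simp: cset_tuple_def)
  have A: "A = (\<lambda>S. if S \<in> multi_indices p q then a S else 0)"
    unfolding A_def by (rule sum_scaled_blades[OF finite_multi_indices])
  have "proj_tuple p q (map blade ks) l A = (\<lambda>S. if S \<in> cset_tuple p q ks l then A S else 0)"
    using l ks by (intro proj_tuple_blades) (auto simp: Ls_def A mvecs_def)
  also have "\<dots> = (\<lambda>S. \<Sum>J\<in>cset_tuple p q ks l. a J * blade J S)"
    unfolding A using C finite_subset[OF C finite_multi_indices]
    by (auto simp: sum_scaled_blades fun_eq_iff)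
  finally show "proj_tuple p q (map blade ks) l A = (\<lambda>S. \<Sum>J\<in>cset_tuple p q ks l. a J * blade J S)" .
qed

end
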